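(* Let $\alpha>0$ and $\hbar>0$ be constants, let $\tilde g:\mathbb{R}\setminus\{0\}\to\mathbb{R}$ be continuously differentiable, and let $\psi:\mathbb{R}\to\mathbb{R}$ be a nonzero real-valued square-integrable function, continuously differentiable on $\mathbb{R}\setminus\{0\}$, such that the quantities $$\mathcal{A}=4\pi\int_{\mathbb{R}}dp\,\frac{\psi(p)^{2}}{p^{4}},\qquad \mathcal{B}=8\pi\int_{\mathbb{R}}dp\,\frac{d\tilde g(p)}{dp}\,\frac{\psi(p)^{2}}{p^{2}},\qquad \mathcal{C}=4\pi\int_{\mathbb{R}}dp\,\left\{\hbar^{2}\left[\frac{d\psi(p)}{dp}\right]^{2}+\left[\frac{d\tilde g(p)}{dp}\right]^{2}\psi(p)^{2}\right\}$$ are finite. Then $\mathcal{B}^{2}<4\mathcal{A}\mathcal{C}$. Consequently the quadratic function $\tau\mapsto \mathcal{A}(\alpha^{2}\tau)^{2}+\mathcal{B}(\alpha^{2}\tau)+\mathcal{C}$ has a strictly positive minimum over $\tau\in\mathbb{R}$.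
   Context: The quadratic $\mathcal{A}(\alpha^{2}\tau)^{2}+\mathcal{B}(\alpha^{2}\tau)+\mathcal{C}$ equals, for real $\psi$, the function $4\pi\int_{\mathbb{R}}dp\,\left|\left(\tilde g'(p)+\alpha^{2}\tau/p^{2}\right)\psi(p)-i\hbar\psi'(p)\right|^{2}$, the expectation value of the gauge-invariant area of 2-spheres at relational time $\tau$ for an arbitrary clock choice encoded by $\tilde g$. *)

theory Defs
  imports "HOL-Analysis.Analysis"
begin

text \<open>The coefficients A, B, C of the quadratic (Lebesgue integrals over the real line).
  Values at p = 0 are irrelevant (a null set); division by zero is 0 in Isabelle.\<close>

definition coefA :: "(real \<Rightarrow> real) \<Rightarrow> real" where
  "coefA \<psi> = 4 * pi * (LINT p|lborel. (\<psi> p)\<^sup>2 / p ^ 4)"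

definition coefB :: "(real \<Rightarrow> real) \<Rightarrow> (real \<Rightarrow> real) \<Rightarrow> real" where
  "coefB g \<psi> = 8 * pi * (LINT p|lborel. deriv g p * (\<psi> p)\<^sup>2 / p\<^sup>2)"

definition coefC :: "real \<Rightarrow> (real \<Rightarrow> real) \<Rightarrow> (real \<Rightarrow> real) \<Rightarrow> real" where
  "coefC hbar g \<psi> = 4 * pi * (LINT p|lborel. hbar\<^sup>2 * (deriv \<psi> p)\<^sup>2 + (deriv g p)\<^sup>2 * (\<psi> p)\<^sup>2)"

end

(*
  For every s, A s\<^sup>2 + B s + C = 4 pi \<integral> ((g' + s / p\<^sup>2)\<^sup>2 \<psi>\<^sup>2 + hbar\<^sup>2 \<psi>'\<^sup>2) dp.
  This integrand is nonnegative and not almost everywhere zero: otherwise \<psi>' = 0 a.e., hence by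
  continuity \<psi>' = 0 off the origin, so \<psi> is constant on each half-line, and square-integrability
  forces both constants to vanish, contradicting \<psi> \<noteq> 0. So the quadratic is positive everywhere;
  as A > 0, its discriminant is negative and its minimum, taken at the vertex, is positive.
*)
theory Submission
  imports Defs
begin

lemma emeasure_lborel_Ioi_eq_top: "emeasure lborel {a::real<..} = \<infinity>"
proof -
  have "of_nat n \<le> emeasure lborel {a<..}" for n
  proof -
    have "of_nat n = emeasure lborel {a<..<a + real n}"
      by (simp add: ennreal_of_nat_eq_real_of_nat)
    also have "\<dots> \<le> emeasure lborel {a<..}"
      by (rule emeasure_mono) auto
    finally show ?thesis .
  qed
  then have "(SUP n. of_nat n) \<le> emeasure lborel {a<..}"
    by (rule SUP_least)
  then show ?thesis
    by (simp add: ennreal_SUP_of_nat_eq_top top.extremum_unique)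
qed

lemma emeasure_lborel_Iio_eq_top: "emeasure lborel {..<a::real} = \<infinity>"
proof -
  have "of_nat n \<le> emeasure lborel {..<a}" for n
  proof -
    have "of_nat n = emeasure lborel {a - real n<..<a}"
      by (simp add: ennreal_of_nat_eq_real_of_nat)
    also have "\<dots> \<le> emeasure lborel {..<a}"
      by (rule emeasure_mono) auto
    finally show ?thesis .
  qed
  then have "(SUP n. of_nat n) \<le> emeasure lborel {..<a}"
    by (rule SUP_least)
  then show ?thesis
    by (simp add: ennreal_SUP_of_nat_eq_top top.extremum_unique)
qed

lemma square_integrable_const_on_infinite_measure_eq_0:
  fixes f :: "'a \<Rightarrow> real"
  assumes "integrable M (\<lambda>x. (f x)\<^sup>2)" "S \<in> sets M" "emeasure M S = \<infinity>"
    and "\<forall>x\<in>S. f x = c"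
  shows "c = 0"
proof (rule ccontr)
  assume "c \<noteq> 0"
  have "integrable M (\<lambda>x. (f x)\<^sup>2 * indicator S x)"
    using assms(2,1) by (rule integrable_real_mult_indicator)
  also have "(\<lambda>x. (f x)\<^sup>2 * indicator S x) = (\<lambda>x. c\<^sup>2 * indicator S x)"
    using assms(4) by (auto simp: indicator_def)
  finally have "integrable M (indicator S :: 'a \<Rightarrow> real)"
    using \<open>c \<noteq> 0\<close> by simp
  then show False
    using assms(2,3) by (simp add: integrable_indicator_iff sets.Int_space_eq2)
qed

lemma continuous_on_AE_eq_0:
  fixes f :: "'a::euclidean_space \<Rightarrow> 'b::real_normed_vector"
  assumes "continuous_on S f" "open S" "AE x in lborel. x \<in> S \<longrightarrow> f x = 0" "x \<in> S"
  shows "f x = 0"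
proof -
  define U where "U = S \<inter> f -` (- {0})"
  have "open U"
    unfolding U_def using assms(1,2) by (intro continuous_open_preimage) auto
  moreover have "AE y \<in> U in lebesgue. y \<in> {}"
    using AE_completion[OF assms(3)] by eventually_elim (auto simp: U_def)
  \<comment> \<open>with the closed set \<open>{}\<close> this says that a nonempty open set is not a null set\<close>
  ultimately have "x \<notin> U"
    using mem_closed_if_AE_lebesgue_open[of U "{}" x] by blast
  then show ?thesis
    using assms(4) by (simp add: U_def)
qed

lemma has_field_derivative_0_if_AE_deriv_eq_0:
  fixes f :: "real \<Rightarrow> real"
  assumes "f C1_differentiable_on S" "open S" "AE x in lborel. deriv f x = 0" "x \<in> S"
  shows "(f has_field_derivative 0) (at x)"
proof -
  obtain D where D: "\<And>y. y \<in> S \<Longrightarrow> (f has_field_derivative D y) (at y)"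
    and "continuous_on S D"
    using assms(1) unfolding C1_differentiable_on_def
    by (auto simp: has_real_derivative_iff_has_vector_derivative)
  have "AE y in lborel. y \<in> S \<longrightarrow> D y = 0"
    using assms(3) by eventually_elim (metis D DERIV_imp_deriv)
  then have "D x = 0"
    using continuous_on_AE_eq_0[OF \<open>continuous_on S D\<close> assms(2) _ assms(4)] by blast
  then show ?thesis
    using D[OF assms(4)] by simp
qed

lemma AE_eq_0_if_AE_deriv_eq_0:
  fixes \<psi> :: "real \<Rightarrow> real"
  assumes C1: "\<psi> C1_differentiable_on (- {0})"
    and square_int: "integrable lborel (\<lambda>p. (\<psi> p)\<^sup>2)"
    and "AE p in lborel. deriv \<psi> p = 0"
  shows "AE p in lborel. \<psi> p = 0"
proof -
  have vanish: "\<psi> x = 0"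
    if "x \<in> H" "convex H" "H \<subseteq> - {0}" "H \<in> sets borel" "emeasure lborel H = \<infinity>" for H x
  proof -
    have "(\<psi> has_field_derivative 0) (at y within H)" if "y \<in> H" for y
    proof -
      have "(\<psi> has_field_derivative 0) (at y)"
        using \<open>H \<subseteq> - {0}\<close> \<open>y \<in> H\<close>
        by (intro has_field_derivative_0_if_AE_deriv_eq_0[OF C1 _ assms(3)]) auto
      then show ?thesis
        by (rule has_field_derivative_at_within)
    qed
    then obtain c where "\<forall>y\<in>H. \<psi> y = c"
      using has_field_derivative_zero_constant[OF \<open>convex H\<close>] by blast
    moreover have "c = 0"
      using square_integrable_const_on_infinite_measure_eq_0[OF square_int]
        \<open>\<forall>y\<in>H. \<psi> y = c\<close> that(4,5) by simp
    ultimately show ?thesis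
      using \<open>x \<in> H\<close> by simp
  qed
  have off_origin: "\<psi> p = 0" if "p \<noteq> 0" for p
  proof (cases "p > 0")
    case True
    then show ?thesis
      using vanish[of p "{0<..}"] emeasure_lborel_Ioi_eq_top by auto
  next
    case False
    then show ?thesis
      using vanish[of p "{..<0}"] emeasure_lborel_Iio_eq_top \<open>p \<noteq> 0\<close> by auto
  qed
  show ?thesis
    using AE_lborel_singleton[of 0] by (rule eventually_mono) (rule off_origin)
qed

lemma integral_pos_if_nonneg_not_AE_eq_0:
  fixes f :: "'a \<Rightarrow> real"
  assumes "integrable M f" "AE x in M. 0 \<le> f x" "\<not> (AE x in M. f x = 0)"
  shows "0 < integral\<^sup>L M f"
  using integral_nonneg_AE[OF assms(2)] integral_nonneg_eq_0_iff_AE[OF assms(1,2)] assms(3)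
  by linarith

lemma quadratic_complete_square:
  fixes a b c s :: real
  assumes "a \<noteq> 0"
  shows "a * s\<^sup>2 + b * s + c = a * (s + b / (2 * a))\<^sup>2 + (c - b\<^sup>2 / (4 * a))"
  using assms by (simp add: field_simps power2_eq_square)

lemma quadratic_vertex_le:
  fixes a b c s :: real
  assumes "a > 0"
  shows "a * (- b / (2 * a))\<^sup>2 + b * (- b / (2 * a)) + c \<le> a * s\<^sup>2 + b * s + c"
  using assms quadratic_complete_square[of a "- b / (2 * a)" b c]
    quadratic_complete_square[of a s b c]
  by simp

lemma quadratic_pos_imp_discriminant_neg:
  fixes a b c :: real
  assumes "a > 0" "\<And>s. a * s\<^sup>2 + b * s + c > 0"
  shows "b\<^sup>2 < 4 * a * c"
proof -
  have "c - b\<^sup>2 / (4 * a) > 0"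
    using assms(2)[of "- b / (2 * a)"] quadratic_complete_square[of a "- b / (2 * a)" b c]
      assms(1)
    by simp
  then show ?thesis
    using assms(1) by (simp add: field_simps)
qed

text \<open>For real \<open>\<psi>\<close> this is \<open>|(g' p + s / p\<^sup>2) \<psi> p - i hbar \<psi>' p|\<^sup>2\<close>, the area density
  at \<open>s = \<alpha>\<^sup>2 \<tau>\<close>.\<close>
definition area_integrand ::
    "real \<Rightarrow> (real \<Rightarrow> real) \<Rightarrow> (real \<Rightarrow> real) \<Rightarrow> real \<Rightarrow> real \<Rightarrow> real" where
  "area_integrand hbar g \<psi> s p = (deriv g p + s / p\<^sup>2)\<^sup>2 * (\<psi> p)\<^sup>2 + hbar\<^sup>2 * (deriv \<psi> p)\<^sup>2"

text \<open>This holds at \<open>p = 0\<close> too, since there \<open>s / p\<^sup>2\<close> and the divided terms are all \<open>0\<close>.\<close>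
lemma area_integrand_expand:
  "area_integrand hbar g \<psi> s p =
     s\<^sup>2 * ((\<psi> p)\<^sup>2 / p ^ 4) + 2 * s * (deriv g p * (\<psi> p)\<^sup>2 / p\<^sup>2)
     + (hbar\<^sup>2 * (deriv \<psi> p)\<^sup>2 + (deriv g p)\<^sup>2 * (\<psi> p)\<^sup>2)"
proof (cases "p = 0")
  case False
  then show ?thesis
    unfolding area_integrand_def
    by (simp add: power2_sum power_divide field_simps flip: power_mult)
qed (simp add: area_integrand_def)

lemma
  assumes "integrable lborel (\<lambda>p. (\<psi> p)\<^sup>2 / p ^ 4)"
    and "integrable lborel (\<lambda>p. deriv g p * (\<psi> p)\<^sup>2 / p\<^sup>2)"
    and "integrable lborel (\<lambda>p. hbar\<^sup>2 * (deriv \<psi> p)\<^sup>2 + (deriv g p)\<^sup>2 * (\<psi> p)\<^sup>2)"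
  shows integrable_area_integrand: "integrable lborel (area_integrand hbar g \<psi> s)"
    and coef_quadratic_eq_area_integral:
      "coefA \<psi> * s\<^sup>2 + coefB g \<psi> * s + coefC hbar g \<psi>
         = 4 * pi * (LINT p|lborel. area_integrand hbar g \<psi> s p)"
proof -
  define fA where "fA = (\<lambda>p::real. (\<psi> p)\<^sup>2 / p ^ 4)"
  define fB where "fB = (\<lambda>p::real. deriv g p * (\<psi> p)\<^sup>2 / p\<^sup>2)"
  define fC where "fC = (\<lambda>p::real. hbar\<^sup>2 * (deriv \<psi> p)\<^sup>2 + (deriv g p)\<^sup>2 * (\<psi> p)\<^sup>2)"
  have int: "integrable lborel fA" "integrable lborel fB" "integrable lborel fC"
    using assms by (simp_all add: fA_def fB_def fC_def)
  have expand: "area_integrand hbar g \<psi> s = (\<lambda>p. s\<^sup>2 * fA p + 2 * s * fB p + fC p)"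
    by (rule ext) (simp only: area_integrand_expand fA_def fB_def fC_def)
  show "integrable lborel (area_integrand hbar g \<psi> s)"
    unfolding expand using int by simp
  have "(LINT p|lborel. area_integrand hbar g \<psi> s p)
      = s\<^sup>2 * integral\<^sup>L lborel fA + 2 * s * integral\<^sup>L lborel fB + integral\<^sup>L lborel fC"
    unfolding expand using int by (simp add: Bochner_Integration.integral_add)
  then show "coefA \<psi> * s\<^sup>2 + coefB g \<psi> * s + coefC hbar g \<psi>
         = 4 * pi * (LINT p|lborel. area_integrand hbar g \<psi> s p)"
    by (simp add: coefA_def coefB_def coefC_def fA_def fB_def fC_def algebra_simps)
qed

lemma area_integral_pos:
  assumes "hbar \<noteq> 0" "integrable lborel (area_integrand hbar g \<psi> s)"
    and "\<not> (AE p in lborel. deriv \<psi> p = 0)"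
  shows "0 < (LINT p|lborel. area_integrand hbar g \<psi> s p)"
proof (rule integral_pos_if_nonneg_not_AE_eq_0[OF assms(2)])
  show "AE p in lborel. 0 \<le> area_integrand hbar g \<psi> s p"
    by (simp add: area_integrand_def)
  have deriv_eq_0: "deriv \<psi> p = 0" if "area_integrand hbar g \<psi> s p = 0" for p
  proof -
    have "0 \<le> (deriv g p + s / p\<^sup>2)\<^sup>2 * (\<psi> p)\<^sup>2"
      by simp
    then have "hbar\<^sup>2 * (deriv \<psi> p)\<^sup>2 \<le> 0"
      using that unfolding area_integrand_def by linarith
    then show ?thesis
      using assms(1) by (simp add: mult_le_0_iff)
  qed
  show "\<not> (AE p in lborel. area_integrand hbar g \<psi> s p = 0)"
  proof
    assume "AE p in lborel. area_integrand hbar g \<psi> s p = 0"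
    then have "AE p in lborel. deriv \<psi> p = 0"
      by (rule eventually_mono) (rule deriv_eq_0)
    with assms(3) show False ..
  qed
qed

lemma coefA_pos:
  assumes "integrable lborel (\<lambda>p. (\<psi> p)\<^sup>2 / p ^ 4)" "\<not> (AE p in lborel. \<psi> p = 0)"
  shows "coefA \<psi> > 0"
proof -
  have "\<not> (AE p in lborel. (\<psi> p)\<^sup>2 / p ^ 4 = 0)"
  proof
    assume "AE p in lborel. (\<psi> p)\<^sup>2 / p ^ 4 = 0"
    with AE_lborel_singleton[of 0] have "AE p in lborel. \<psi> p = 0"
      by eventually_elim simp
    with assms(2) show False ..
  qed
  then show ?thesis
    using integral_pos_if_nonneg_not_AE_eq_0[OF assms(1)] by (simp add: coefA_def)
qed

theorem mainTheorem2:
  fixes \<alpha> hbar :: real and g \<psi> :: "real \<Rightarrow> real"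
  assumes "\<alpha> > 0" and "hbar > 0"
    and "g C1_differentiable_on (- {0})"
    and "\<psi> C1_differentiable_on (- {0})"
    and "\<psi> \<in> borel_measurable lborel"
    and "integrable lborel (\<lambda>p. (\<psi> p)\<^sup>2)"
    and "\<not> (AE p in lborel. \<psi> p = 0)"
    and "integrable lborel (\<lambda>p. (\<psi> p)\<^sup>2 / p ^ 4)"
    and "integrable lborel (\<lambda>p. deriv g p * (\<psi> p)\<^sup>2 / p\<^sup>2)"
    and "integrable lborel (\<lambda>p. hbar\<^sup>2 * (deriv \<psi> p)\<^sup>2 + (deriv g p)\<^sup>2 * (\<psi> p)\<^sup>2)"
  shows "(coefB g \<psi>)\<^sup>2 < 4 * coefA \<psi> * coefC hbar g \<psi>
     \<and> (\<exists>\<tau>0::real.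
          (\<forall>\<tau>::real. coefA \<psi> * (\<alpha>\<^sup>2 * \<tau>0)\<^sup>2 + coefB g \<psi> * (\<alpha>\<^sup>2 * \<tau>0) + coefC hbar g \<psi>
                  \<le> coefA \<psi> * (\<alpha>\<^sup>2 * \<tau>)\<^sup>2 + coefB g \<psi> * (\<alpha>\<^sup>2 * \<tau>) + coefC hbar g \<psi>)
        \<and> coefA \<psi> * (\<alpha>\<^sup>2 * \<tau>0)\<^sup>2 + coefB g \<psi> * (\<alpha>\<^sup>2 * \<tau>0) + coefC hbar g \<psi> > 0)"
proof -
  define a b c where "a = coefA \<psi>" "b = coefB g \<psi>" "c = coefC hbar g \<psi>"
  have "a > 0"
    using coefA_pos[OF assms(8,7)] by (simp add: a_b_c_def)
  have "\<not> (AE p in lborel. deriv \<psi> p = 0)"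
    using AE_eq_0_if_AE_deriv_eq_0[OF assms(4,6)] assms(7) by blast
  have pos: "a * s\<^sup>2 + b * s + c > 0" for s
  proof -
    have "0 < (LINT p|lborel. area_integrand hbar g \<psi> s p)"
      using assms(2) integrable_area_integrand[OF assms(8-10)]
        \<open>\<not> (AE p in lborel. deriv \<psi> p = 0)\<close> by (intro area_integral_pos) auto
    then show ?thesis
      using coef_quadratic_eq_area_integral[OF assms(8-10), of s] unfolding a_b_c_def by simp
  qed
  have "b\<^sup>2 < 4 * a * c"
    by (rule quadratic_pos_imp_discriminant_neg[OF \<open>a > 0\<close> pos])
  define \<tau>0 where "\<tau>0 = - b / (2 * a) / \<alpha>\<^sup>2"
  have "\<alpha>\<^sup>2 * \<tau>0 = - b / (2 * a)"
    using assms(1) by (simp add: \<tau>0_def)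
  then have "\<forall>\<tau>. a * (\<alpha>\<^sup>2 * \<tau>0)\<^sup>2 + b * (\<alpha>\<^sup>2 * \<tau>0) + c
                \<le> a * (\<alpha>\<^sup>2 * \<tau>)\<^sup>2 + b * (\<alpha>\<^sup>2 * \<tau>) + c"
    using quadratic_vertex_le[OF \<open>a > 0\<close>] by simp
  with \<open>b\<^sup>2 < 4 * a * c\<close> pos[of "\<alpha>\<^sup>2 * \<tau>0"] show ?thesis
    unfolding a_b_c_def[symmetric] by blast
qed

end
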